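(* For any pair of rooted trees $T_1,T_2$ on leaf set $[n]$, the cone $K_{T_1}+K_{T_2}$, considered in $\mathbb{R}^{\binom{[n]}{2}}/\mathbb{R}(1,\dots,1)^T$, is a simplicial cone generated by $\{-v_C\}_{C\in\mathrm{clade}^\circ(T_1)\cup\mathrm{clade}^\circ(T_2)}$; that is, $K_{T_1}+K_{T_2}=\mathbb{R}(1,\dots,1)^T+\mathrm{cone}\{-v_C: C\in\mathrm{clade}^\circ(T_1)\cup\mathrm{clade}^\circ(T_2)\}$, and the images of these generators in the quotient $\mathbb{R}^{\binom{[n]}{2}}/\mathbb{R}(1,\dots,1)^T$ are linearly independent.
   Context: A rooted tree on leaf set $[n]$ has leaves labeled bijectively by $[n]$ and internal vertices each with at least two children. A clade of $T$ is the set of leaves below an internal vertex; $\mathrm{clade}(T)$ is the set of clades and $\mathrm{clade}^\circ(T)=\mathrm{clade}(T)\setminus\{[n]\}$. For $C\subseteq[n]$, $v_C\in\mathbb{R}^{\binom{[n]}{2}}$ is the characteristic vector of $\binom{C}{2}$. An ultrametric is $\delta\in\mathbb{R}^{\binom{[n]}{2}}$ with $\delta_{uv}\le\max\{\delta_{uw},\delta_{vw}\}$ for all distinct $u,v,w$. $K_T$ is the set of $\delta$ such that there are real weights on the internal vertices of $T$, weakly increasing along every path toward the root, with $\delta_{uv}$ equal to the weight of the most recent common ancestor of $u$ and $v$; $K_{T_1}+K_{T_2}$ is the Minkowski sum. *)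

theory Defs
  imports "HOL-Analysis.Analysis"
begin

text \<open>Coordinates of \<open>\<real>^(binom [n] 2)\<close>: the 2-element subsets of \<open>[n] = {1..n}\<close>.\<close>

definition pairs :: "nat \<Rightarrow> nat set set" where
  "pairs n = {e. e \<subseteq> {1..n} \<and> card e = 2}"

definition vec_space :: "nat \<Rightarrow> (nat set \<Rightarrow> real) set" where
  "vec_space n = {x. \<forall>e. e \<notin> pairs n \<longrightarrow> x e = 0}"

definition ones :: "nat \<Rightarrow> nat set \<Rightarrow> real" where
  "ones n = (\<lambda>e. if e \<in> pairs n then 1 else 0)"

definition charvec :: "nat \<Rightarrow> nat set \<Rightarrow> nat set \<Rightarrow> real" where
  "charvec n C = (\<lambda>e. if e \<in> pairs n \<and> e \<subseteq> C then 1 else 0)"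

text \<open>A rooted tree on leaf set \<open>[n]\<close> (internal vertices with at least two children)
  is encoded by its set of clades, i.e. a hierarchy on \<open>[n]\<close>: a laminar family of subsets
  of \<open>[n]\<close> of size at least 2 containing \<open>[n]\<close> (when \<open>n \<ge> 2\<close>). Internal vertices
  correspond bijectively to clades.\<close>
definition rooted_tree :: "nat \<Rightarrow> nat set set \<Rightarrow> bool" where
  "rooted_tree n H \<longleftrightarrow>
     (\<forall>C\<in>H. C \<subseteq> {1..n} \<and> 2 \<le> card C) \<and>
     (n \<ge> 2 \<longrightarrow> {1..n} \<in> H) \<and>
     (\<forall>C\<in>H. \<forall>D\<in>H. C \<subseteq> D \<or> D \<subseteq> C \<or> C \<inter> D = {})"

definition proper_clades :: "nat \<Rightarrow> nat set set \<Rightarrow> nat set set" where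
  "proper_clades n H = H - {{1..n}}"

definition mrca :: "nat set set \<Rightarrow> nat set \<Rightarrow> nat set" where
  "mrca H e = \<Inter>{C\<in>H. e \<subseteq> C}"

text \<open>\<open>K_T\<close>: weights on internal vertices (clades), weakly increasing towards the root
  (i.e. monotone w.r.t. inclusion of clades), \<open>\<delta>_{uv}\<close> = weight of mrca of u and v.\<close>
definition K :: "nat \<Rightarrow> nat set set \<Rightarrow> (nat set \<Rightarrow> real) set" where
  "K n H = {\<delta> \<in> vec_space n. \<exists>w :: nat set \<Rightarrow> real.
              (\<forall>C\<in>H. \<forall>D\<in>H. C \<subseteq> D \<longrightarrow> w C \<le> w D) \<and>
              (\<forall>e\<in>pairs n. \<delta> e = w (mrca H e))}"

definition minkowski_sum :: "('b \<Rightarrow> real) set \<Rightarrow> ('b \<Rightarrow> real) set \<Rightarrow> ('b \<Rightarrow> real) set" where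
  "minkowski_sum A B = {(\<lambda>e. x e + y e) | x y. x \<in> A \<and> y \<in> B}"

definition cone_gen :: "'i set \<Rightarrow> ('i \<Rightarrow> 'b \<Rightarrow> real) \<Rightarrow> ('b \<Rightarrow> real) set" where
  "cone_gen I g = {(\<lambda>e. \<Sum>i\<in>I. c i * g i e) | c. \<forall>i\<in>I. c i \<ge> 0}"

end

(* Telescoping the weights along the path to the root writes every element of K_T as
   t * 1 - \<Sum> c_C v_C with c_C = w(parent C) - w(C) \<ge> 0 over the non-root clades C, so K_T is the
   line R 1 plus the cone on the -v_C; Minkowski sums of such sets just merge the generators.
   For independence modulo the line, note 1 = v_[n] with [n] a clade of both trees, so it suffices
   that the v_C for C in T1 \<union> T2 are linearly independent.  This holds for the union of any two
   laminar families of sets of size at least 2: a maximal member C contains two points that no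
   other member contains together, so evaluating a vanishing combination at that pair kills the
   coefficient of C, and induction on the number of members finishes.  The pair is found from
   x \<in> C and the largest member of each family containing x: neither contains C, and a pair in C
   separated by both of them is covered by no member. *)

theory Submission
  imports Defs "HOL-Library.Function_Algebras"
begin

definition laminar :: "'a set set \<Rightarrow> bool" where
  "laminar H \<longleftrightarrow> (\<forall>C\<in>H. \<forall>D\<in>H. C \<subseteq> D \<or> D \<subseteq> C \<or> C \<inter> D = {})"

lemma laminar_subset: "laminar H \<Longrightarrow> G \<subseteq> H \<Longrightarrow> laminar G"
  unfolding laminar_def by blast

lemma laminar_chain:
  assumes "laminar H" "S \<subseteq> H" "\<forall>D\<in>S. x \<in> D"
  shows "subset.chain H S"
  using assms unfolding laminar_def subset_chain_def by blast

lemma laminar_Inter_mem: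
  assumes "finite H" "laminar H" "S \<subseteq> H" "S \<noteq> {}" "x \<in> \<Inter>S"
  shows "\<Inter>S \<in> S"
proof (rule Inter_in_chain)
  show "finite S" using assms(1,3) by (rule finite_subset[rotated])
  show "subset.chain H S" using assms(2,3,5) by (intro laminar_chain[of H S x]) auto
qed (fact assms(4))

text \<open>The largest member of a laminar family \<open>L\<close> containing \<open>x\<close>, or \<open>{x}\<close> if there is none.\<close>

definition laminar_block :: "'a set set \<Rightarrow> 'a \<Rightarrow> 'a set" where
  "laminar_block L x = insert x (\<Union>{D\<in>L. x \<in> D})"

lemma laminar_block_closed:
  assumes "laminar L" "D \<in> L" "z \<in> D" "z \<in> laminar_block L x"
  shows "D \<subseteq> laminar_block L x"
  using assms unfolding laminar_block_def laminar_def by blast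

lemma laminar_block_not_superset:
  assumes "finite L" "laminar L" "2 \<le> card C" "x \<in> C" "\<forall>D\<in>L. \<not> C \<subseteq> D"
  shows "\<not> C \<subseteq> laminar_block L x"
proof (cases "{D\<in>L. x \<in> D} = {}")
  case True
  then have "laminar_block L x = {x}" unfolding laminar_block_def by auto
  moreover have "C \<noteq> {x}" using assms(3) by auto
  ultimately show ?thesis using assms(4) by blast
next
  case False
  have "\<Union>{D\<in>L. x \<in> D} \<in> {D\<in>L. x \<in> D}"
    using Union_in_chain[OF _ False laminar_chain[OF assms(2)]] assms(1) by auto
  then show ?thesis unfolding laminar_block_def using assms(5) by (auto simp: insert_absorb)
qed

lemma laminar_pair_uncovered:
  assumes "finite L1" "finite L2" "laminar L1" "laminar L2"
    and "2 \<le> card C" "\<forall>D\<in>L1 \<union> L2. \<not> C \<subseteq> D"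
  obtains u v where "u \<in> C" "v \<in> C" "u \<noteq> v" "\<forall>D\<in>L1 \<union> L2. \<not> {u, v} \<subseteq> D"
proof -
  obtain x where x: "x \<in> C" using assms(5) by fastforce
  define H1 H2 where "H1 = laminar_block L1 x" and "H2 = laminar_block L2 x"
  have x_in: "x \<in> H1" "x \<in> H2" unfolding H1_def H2_def laminar_block_def by auto
  obtain y z where y: "y \<in> C" "y \<notin> H1" and z: "z \<in> C" "z \<notin> H2"
    using laminar_block_not_superset[OF assms(1,3,5) x] laminar_block_not_superset[OF assms(2,4,5) x]
      assms(6) unfolding H1_def H2_def by blast
  have separated: "u \<noteq> v \<and> (\<forall>D\<in>L1 \<union> L2. \<not> {u, v} \<subseteq> D)"
    if "u \<in> H1 \<longleftrightarrow> v \<notin> H1" "u \<in> H2 \<longleftrightarrow> v \<notin> H2" for u v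
    using that laminar_block_closed[OF assms(3), of _ _ x] laminar_block_closed[OF assms(4), of _ _ x]
    unfolding H1_def H2_def by blast
  consider "y \<notin> H2" | "z \<notin> H1" | "y \<in> H2" "z \<in> H1" by blast
  then show ?thesis
  proof cases
    case 1
    then show ?thesis using that[OF x y(1)] separated[of x y] x_in y by blast
  next
    case 2
    then show ?thesis using that[OF x z(1)] separated[of x z] x_in z by blast
  next
    case 3
    then show ?thesis using that[OF y(1) z(1)] separated[of y z] y z by blast
  qed
qed

lemma charvec_independent_laminar:
  assumes "finite H1" "finite H2" "laminar H1" "laminar H2"
    and "\<forall>C\<in>H1 \<union> H2. C \<subseteq> {1..n} \<and> 2 \<le> card C"
    and "\<forall>e. (\<Sum>C\<in>H1 \<union> H2. b C * charvec n C e) = 0"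
  shows "\<forall>C\<in>H1 \<union> H2. b C = 0"
  using assms
proof (induction "card (H1 \<union> H2)" arbitrary: H1 H2 rule: less_induct)
  case less
  let ?H = "H1 \<union> H2"
  have fin: "finite ?H" using less.prems(1,2) by blast
  show ?case
  proof (cases "?H = {}")
    case False
    obtain C where C: "C \<in> ?H" and maximal: "\<forall>D\<in>?H. C \<subseteq> D \<longrightarrow> C = D"
      using finite_has_maximal[OF fin False] by blast
    have laminar_rest: "laminar (H1 - {C})" "laminar (H2 - {C})"
      using laminar_subset less.prems(3,4) by blast+
    obtain u v where uv: "u \<in> C" "v \<in> C" "u \<noteq> v"
      and uncovered: "\<forall>D\<in>(H1 - {C}) \<union> (H2 - {C}). \<not> {u, v} \<subseteq> D"
    proof (rule laminar_pair_uncovered[of "H1 - {C}" "H2 - {C}" C])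
      show "2 \<le> card C" using less.prems(5) C by blast
      show "\<forall>D\<in>(H1 - {C}) \<union> (H2 - {C}). \<not> C \<subseteq> D" using maximal by blast
    qed (use less.prems(1,2) laminar_rest in auto)
    have "C \<subseteq> {1..n}" using less.prems(5) C by blast
    then have "{u, v} \<in> pairs n" using uv unfolding pairs_def by auto
    then have charvec_pair: "charvec n D {u, v} = (if D = C then 1 else 0)" if "D \<in> ?H" for D
      using that uv uncovered unfolding charvec_def by auto
    have "(\<Sum>D\<in>?H. b D * charvec n D {u, v}) = b C"
    proof -
      have "(\<Sum>D\<in>?H. b D * charvec n D {u, v}) = (\<Sum>D\<in>?H. if D = C then b D else 0)"
        using charvec_pair by (intro sum.cong) auto
      also have "\<dots> = b C" using fin C by simp
      finally show ?thesis .
    qed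
    then have bC: "b C = 0" using less.prems(6) by simp
    have rest: "(H1 - {C}) \<union> (H2 - {C}) = ?H - {C}" by blast
    have "(\<Sum>D\<in>(H1 - {C}) \<union> (H2 - {C}). b D * charvec n D e) = 0" for e
      using sum.remove[OF fin C, of "\<lambda>D. b D * charvec n D e"] less.prems(6) bC
      unfolding rest by simp
    moreover have "card ((H1 - {C}) \<union> (H2 - {C})) < card ?H"
      unfolding rest using fin C by (rule card_Diff1_less)
    ultimately have "\<forall>D\<in>(H1 - {C}) \<union> (H2 - {C}). b D = 0"
      using less.hyps[of "H1 - {C}" "H2 - {C}"] less.prems(1,2,5) laminar_rest by blast
    then show ?thesis using bC by blast
  qed simp
qed

lemma rooted_tree_clade:
  assumes "rooted_tree n T" "C \<in> T"
  shows "C \<subseteq> {1..n}" and "2 \<le> card C"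
  using assms unfolding rooted_tree_def by blast+

lemma rooted_tree_clade_two_le: "rooted_tree n T \<Longrightarrow> C \<in> T \<Longrightarrow> 2 \<le> n"
  using rooted_tree_clade card_mono[of "{1..n}" C] by fastforce

lemma rooted_tree_empty: "rooted_tree n T \<Longrightarrow> n < 2 \<Longrightarrow> T = {}"
  using rooted_tree_clade_two_le by fastforce

lemma rooted_tree_root: "rooted_tree n T \<Longrightarrow> 2 \<le> n \<Longrightarrow> {1..n} \<in> T"
  unfolding rooted_tree_def by blast

lemma rooted_tree_laminar: "rooted_tree n T \<Longrightarrow> laminar T"
  unfolding rooted_tree_def laminar_def by blast

lemma rooted_tree_finite: "rooted_tree n T \<Longrightarrow> finite T"
  using rooted_tree_clade(1) finite_subset[of T "Pow {1..n}"] by blast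

lemma finite_proper_clades: "rooted_tree n T \<Longrightarrow> finite (proper_clades n T)"
  unfolding proper_clades_def using rooted_tree_finite by blast

lemma mem_pairs_two_le: "e \<in> pairs n \<Longrightarrow> 2 \<le> n"
  unfolding pairs_def using card_mono[of "{1..n}" e] by fastforce

lemma mrca_clade:
  assumes "rooted_tree n T" "e \<in> pairs n"
  shows "mrca T e \<in> T" and "e \<subseteq> mrca T e"
proof -
  have e: "e \<subseteq> {1..n}" "card e = 2" using assms(2) unfolding pairs_def by auto
  then obtain u where "u \<in> e" by (auto simp: card_2_iff)
  moreover have "{1..n} \<in> T" using rooted_tree_root[OF assms(1) mem_pairs_two_le[OF assms(2)]] .
  ultimately have "\<Inter>{C\<in>T. e \<subseteq> C} \<in> {C\<in>T. e \<subseteq> C}"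
    using e(1) rooted_tree_finite[OF assms(1)] rooted_tree_laminar[OF assms(1)]
    by (intro laminar_Inter_mem[of T _ u]) auto
  then show "mrca T e \<in> T" "e \<subseteq> mrca T e" unfolding mrca_def by auto
qed

lemma mrca_subset_iff:
  assumes "rooted_tree n T" "e \<in> pairs n" "C \<in> T"
  shows "mrca T e \<subseteq> C \<longleftrightarrow> e \<subseteq> C"
  using mrca_clade(2)[OF assms(1,2)] assms(3) unfolding mrca_def by blast

definition parent_clade :: "nat set set \<Rightarrow> nat set \<Rightarrow> nat set" where
  "parent_clade T X = \<Inter>{D\<in>T. X \<subset> D}"

lemma parent_clade_clade:
  assumes "rooted_tree n T" "X \<in> T" "X \<noteq> {1..n}"
  shows "parent_clade T X \<in> T" and "X \<subset> parent_clade T X"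
proof -
  obtain u where "u \<in> X" using rooted_tree_clade(2)[OF assms(1,2)] by fastforce
  moreover have "{1..n} \<in> T" "X \<subset> {1..n}"
    using rooted_tree_root rooted_tree_clade_two_le rooted_tree_clade(1) assms by blast+
  ultimately have "\<Inter>{D\<in>T. X \<subset> D} \<in> {D\<in>T. X \<subset> D}"
    using rooted_tree_finite[OF assms(1)] rooted_tree_laminar[OF assms(1)]
    by (intro laminar_Inter_mem[of T _ u]) auto
  then show "parent_clade T X \<in> T" "X \<subset> parent_clade T X" unfolding parent_clade_def by auto
qed

lemma parent_clade_least: "D \<in> T \<Longrightarrow> X \<subset> D \<Longrightarrow> parent_clade T X \<subseteq> D"
  unfolding parent_clade_def by blast

lemma weight_telescope:
  fixes w :: "nat set \<Rightarrow> real"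
  assumes "rooted_tree n T" "X \<in> T"
  shows "w X = w {1..n} - (\<Sum>C | C \<in> proper_clades n T \<and> X \<subseteq> C. w (parent_clade T C) - w C)"
  using assms(2)
proof (induction "n - card X" arbitrary: X rule: less_induct)
  case less
  let ?P = "proper_clades n T"
  note sub = rooted_tree_clade(1)[OF assms(1)]
  show ?case
  proof (cases "X = {1..n}")
    case True
    then have "{C. C \<in> ?P \<and> X \<subseteq> C} = {}" using sub unfolding proper_clades_def by blast
    then show ?thesis using True by (simp only: sum.empty diff_zero)
  next
    case False
    let ?Y = "parent_clade T X"
    have Y: "?Y \<in> T" "X \<subset> ?Y" using parent_clade_clade[OF assms(1) less.prems False] by auto
    have "card X < card ?Y"
      using Y sub[OF Y(1)] by (meson finite_atLeastAtMost finite_subset psubset_card_mono)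
    moreover have "card ?Y \<le> n" using card_mono[OF _ sub[OF Y(1)]] by simp
    ultimately have "w ?Y = w {1..n} - (\<Sum>C | C \<in> ?P \<and> ?Y \<subseteq> C. w (parent_clade T C) - w C)"
      using less.hyps Y(1) by simp
    moreover have "{C. C \<in> ?P \<and> X \<subseteq> C} = insert X {C. C \<in> ?P \<and> ?Y \<subseteq> C}"
      using less.prems False Y parent_clade_least[of _ T X] unfolding proper_clades_def by auto
    moreover have "finite {C. C \<in> ?P \<and> ?Y \<subseteq> C}" "X \<notin> {C. C \<in> ?P \<and> ?Y \<subseteq> C}"
      using rooted_tree_finite[OF assms(1)] Y(2) unfolding proper_clades_def by auto
    ultimately show ?thesis by simp
  qed
qed

lemma sum_charvec:
  assumes "finite A"
  shows "(\<Sum>C\<in>A. c C * charvec n C e) = (if e \<in> pairs n then (\<Sum>C | C \<in> A \<and> e \<subseteq> C. c C) else 0)"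
  using sum.inter_filter[OF assms, of c "\<lambda>C. e \<subseteq> C"] unfolding charvec_def
  by (simp add: if_distrib cong: if_cong)

lemma charvec_root: "charvec n {1..n} = ones n"
  unfolding charvec_def ones_def pairs_def by auto

lemma minkowski_sum_eq_set_plus: "minkowski_sum A B = A + B"
  unfolding minkowski_sum_def set_plus_def plus_fun_def by blast

lemma mem_line_plus_cone_gen:
  "x \<in> {(\<lambda>e. t * l e) | t. True} + cone_gen I g \<longleftrightarrow>
     (\<exists>t c. (\<forall>i\<in>I. 0 \<le> c i) \<and> x = (\<lambda>e. t * l e + (\<Sum>i\<in>I. c i * g i e)))"
  unfolding set_plus_def cone_gen_def plus_fun_def by auto

lemma line_plus_line:
  "{(\<lambda>e. t * l e) | t. True} + {(\<lambda>e. t * l e) | t. True} = {(\<lambda>e. t * l e :: real) | t. True}"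
proof (intro set_eqI iffI)
  fix x assume "x \<in> {(\<lambda>e. t * l e) | t. True} + {(\<lambda>e. t * l e) | t. True}"
  then obtain s t where "x = (\<lambda>e. s * l e) + (\<lambda>e. t * l e)" unfolding set_plus_def by blast
  then have "x = (\<lambda>e. (s + t) * l e)" by (simp add: plus_fun_def algebra_simps)
  then show "x \<in> {(\<lambda>e. t * l e) | t. True}" by blast
next
  fix x assume "x \<in> {(\<lambda>e. t * l e :: real) | t. True}"
  moreover have "x = x + (\<lambda>e. 0 * l e)" by (simp add: plus_fun_def)
  ultimately show "x \<in> {(\<lambda>e. t * l e) | t. True} + {(\<lambda>e. t * l e) | t. True}"
    unfolding set_plus_def by blast
qed

lemma sum_zero_extension:
  fixes f :: "'i \<Rightarrow> real"
  assumes "finite J" "I \<subseteq> J"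
  shows "(\<Sum>i\<in>J. (if i \<in> I then c i else 0) * f i) = (\<Sum>i\<in>I. c i * f i)"
  by (rule sum.mono_neutral_cong_right) (use assms in auto)

lemma cone_gen_Un:
  assumes "finite I" "finite J"
  shows "cone_gen I g + cone_gen J g = cone_gen (I \<union> J) g"
proof (intro set_eqI iffI)
  fix x assume "x \<in> cone_gen I g + cone_gen J g"
  then obtain c d where cd: "\<forall>i\<in>I. 0 \<le> c i" "\<forall>i\<in>J. 0 \<le> d i"
    and x: "x = (\<lambda>e. (\<Sum>i\<in>I. c i * g i e) + (\<Sum>i\<in>J. d i * g i e))"
    unfolding set_plus_def cone_gen_def plus_fun_def by blast
  define k where "k i = (if i \<in> I then c i else 0) + (if i \<in> J then d i else 0)" for i
  have "x = (\<lambda>e. \<Sum>i\<in>I \<union> J. k i * g i e)"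
    unfolding x k_def distrib_right sum.distrib
    using sum_zero_extension[of "I \<union> J" I] sum_zero_extension[of "I \<union> J" J] assms by simp
  moreover have "\<forall>i\<in>I \<union> J. 0 \<le> k i" unfolding k_def using cd by auto
  ultimately show "x \<in> cone_gen (I \<union> J) g" unfolding cone_gen_def by blast
next
  fix x assume "x \<in> cone_gen (I \<union> J) g"
  then obtain c where c: "\<forall>i\<in>I \<union> J. 0 \<le> c i" and x: "x = (\<lambda>e. \<Sum>i\<in>I \<union> J. c i * g i e)"
    unfolding cone_gen_def by blast
  define d where "d i = (if i \<in> J - I then c i else 0)" for i
  have "(\<Sum>i\<in>I \<union> J. c i * g i e) = (\<Sum>i\<in>I. c i * g i e) + (\<Sum>i\<in>J. d i * g i e)" for e
  proof -
    have "(\<Sum>i\<in>I \<union> J. c i * g i e) = (\<Sum>i\<in>I \<union> (J - I). c i * g i e)" by simp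
    also have "\<dots> = (\<Sum>i\<in>I. c i * g i e) + (\<Sum>i\<in>J - I. c i * g i e)"
      using assms by (intro sum.union_disjoint) auto
    also have "(\<Sum>i\<in>J - I. c i * g i e) = (\<Sum>i\<in>J. d i * g i e)"
      unfolding d_def using sum_zero_extension[of J "J - I"] assms by simp
    finally show ?thesis .
  qed
  then have "x = (\<lambda>e. \<Sum>i\<in>I. c i * g i e) + (\<lambda>e. \<Sum>i\<in>J. d i * g i e)"
    unfolding x plus_fun_def by simp
  moreover have "\<forall>i\<in>J. 0 \<le> d i" unfolding d_def using c by auto
  ultimately show "x \<in> cone_gen I g + cone_gen J g"
    using c unfolding set_plus_def cone_gen_def by blast
qed

lemma line_plus_cone_subset_K:
  assumes "rooted_tree n T"
  shows "{(\<lambda>e. t * ones n e) | t. True} + cone_gen (proper_clades n T) (\<lambda>C. - charvec n C)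
           \<subseteq> K n T"
proof
  let ?P = "proper_clades n T"
  have fin: "finite ?P" using finite_proper_clades[OF assms] .
  fix \<delta> assume "\<delta> \<in> {(\<lambda>e. t * ones n e) | t. True} + cone_gen ?P (\<lambda>C. - charvec n C)"
  then obtain t c where c: "\<forall>C\<in>?P. 0 \<le> c C"
    and "\<delta> = (\<lambda>e. t * ones n e + (\<Sum>C\<in>?P. c C * - charvec n C e))"
    unfolding mem_line_plus_cone_gen by auto
  then have \<delta>: "\<delta> e = (if e \<in> pairs n then t - (\<Sum>C | C \<in> ?P \<and> e \<subseteq> C. c C) else 0)" for e
    using sum_charvec[OF fin, of c n e] by (simp add: ones_def sum_negf)
  define w where "w D = t - (\<Sum>C | C \<in> ?P \<and> D \<subseteq> C. c C)" for D
  have "w C \<le> w D" if "C \<subseteq> D" for C D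
  proof -
    have "(\<Sum>E | E \<in> ?P \<and> D \<subseteq> E. c E) \<le> (\<Sum>E | E \<in> ?P \<and> C \<subseteq> E. c E)"
      using fin c that by (intro sum_mono2) auto
    then show ?thesis unfolding w_def by simp
  qed
  moreover have "\<delta> e = w (mrca T e)" if "e \<in> pairs n" for e
  proof -
    have "{C. C \<in> ?P \<and> mrca T e \<subseteq> C} = {C. C \<in> ?P \<and> e \<subseteq> C}"
      using mrca_subset_iff[OF assms that] unfolding proper_clades_def by blast
    then show ?thesis using that unfolding \<delta> w_def by simp
  qed
  moreover have "\<delta> \<in> vec_space n" unfolding vec_space_def \<delta> by simp
  ultimately show "\<delta> \<in> K n T" unfolding K_def by (intro CollectI conjI exI[of _ w]) auto
qed

lemma K_subset_line_plus_cone: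
  assumes "rooted_tree n T"
  shows "K n T \<subseteq>
           {(\<lambda>e. t * ones n e) | t. True} + cone_gen (proper_clades n T) (\<lambda>C. - charvec n C)"
proof
  let ?P = "proper_clades n T"
  have fin: "finite ?P" using finite_proper_clades[OF assms] .
  fix \<delta> assume "\<delta> \<in> K n T"
  then obtain w :: "nat set \<Rightarrow> real" where "\<delta> \<in> vec_space n"
    and mono: "\<forall>C\<in>T. \<forall>D\<in>T. C \<subseteq> D \<longrightarrow> w C \<le> w D"
    and \<delta>: "\<forall>e\<in>pairs n. \<delta> e = w (mrca T e)" unfolding K_def by blast
  define c where "c C = w (parent_clade T C) - w C" for C
  have "0 \<le> c C" if "C \<in> ?P" for C
  proof -
    have "C \<in> T" "C \<noteq> {1..n}" using that unfolding proper_clades_def by auto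
    then show ?thesis
      using parent_clade_clade[OF assms] mono unfolding c_def by (meson diff_ge_0_iff_ge psubset_imp_subset)
  qed
  moreover have "\<delta> = (\<lambda>e. w {1..n} * ones n e + (\<Sum>C\<in>?P. c C * - charvec n C e))"
  proof
    fix e
    show "\<delta> e = w {1..n} * ones n e + (\<Sum>C\<in>?P. c C * - charvec n C e)"
    proof (cases "e \<in> pairs n")
      case False
      then show ?thesis using \<open>\<delta> \<in> vec_space n\<close> sum_charvec[OF fin, of c n e]
        by (simp add: vec_space_def ones_def sum_negf)
    next
      case True
      have "{C. C \<in> ?P \<and> mrca T e \<subseteq> C} = {C. C \<in> ?P \<and> e \<subseteq> C}"
        using mrca_subset_iff[OF assms True] unfolding proper_clades_def by blast
      then show ?thesis
        using True \<delta> weight_telescope[OF assms mrca_clade(1)[OF assms True], of w]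
          sum_charvec[OF fin, of c n e]
        by (simp add: c_def ones_def sum_negf)
    qed
  qed
  ultimately show "\<delta> \<in> {(\<lambda>e. t * ones n e) | t. True} + cone_gen ?P (\<lambda>C. - charvec n C)"
    unfolding mem_line_plus_cone_gen by (intro exI[of _ "w {1..n}"] exI[of _ c]) auto
qed

lemma K_eq_line_plus_cone:
  "rooted_tree n T \<Longrightarrow>
     K n T = {(\<lambda>e. t * ones n e) | t. True} + cone_gen (proper_clades n T) (\<lambda>C. - charvec n C)"
  using K_subset_line_plus_cone line_plus_cone_subset_K by (intro equalityI)

text \<open>Since \<open>ones n = charvec n {1..n}\<close> and \<open>{1..n}\<close> is the root clade of both trees, this is
  the independence of the \<open>charvec n C\<close> over all clades \<open>C\<close> of \<open>T1\<close> and \<open>T2\<close>.\<close>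

lemma proper_clades_independent_mod_ones:
  assumes "rooted_tree n T1" "rooted_tree n T2"
    and "\<forall>e. (\<Sum>C\<in>proper_clades n T1 \<union> proper_clades n T2. a C * charvec n C e) = t * ones n e"
  shows "\<forall>C\<in>proper_clades n T1 \<union> proper_clades n T2. a C = 0"
proof (cases "n < 2")
  case True
  then show ?thesis
    using rooted_tree_empty[OF assms(1) True] rooted_tree_empty[OF assms(2) True]
    unfolding proper_clades_def by simp
next
  case False
  let ?U = "proper_clades n T1 \<union> proper_clades n T2"
  have root: "{1..n} \<in> T1" "{1..n} \<in> T2" using False rooted_tree_root assms(1,2) by simp_all
  have fin: "finite ?U" using finite_proper_clades assms(1,2) by blast
  have T12: "T1 \<union> T2 = insert {1..n} ?U" "{1..n} \<notin> ?U" using root unfolding proper_clades_def by auto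
  define b where "b C = (if C = {1..n} then - t else a C)" for C
  have combination: "\<forall>e. (\<Sum>C\<in>T1 \<union> T2. b C * charvec n C e) = 0"
  proof
    fix e
    have "(\<Sum>C\<in>T1 \<union> T2. b C * charvec n C e) =
        b {1..n} * charvec n {1..n} e + (\<Sum>C\<in>?U. b C * charvec n C e)"
      unfolding T12(1) using fin T12(2) by (rule sum.insert)
    also have "(\<Sum>C\<in>?U. b C * charvec n C e) = (\<Sum>C\<in>?U. a C * charvec n C e)"
      using T12(2) unfolding b_def by (intro sum.cong) auto
    finally show "(\<Sum>C\<in>T1 \<union> T2. b C * charvec n C e) = 0"
      unfolding charvec_root b_def using assms(3) by simp
  qed
  have clades: "\<forall>C\<in>T1 \<union> T2. C \<subseteq> {1..n} \<and> 2 \<le> card C"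
    using rooted_tree_clade[OF assms(1)] rooted_tree_clade[OF assms(2)] by auto
  have b0: "\<forall>C\<in>T1 \<union> T2. b C = 0"
    by (rule charvec_independent_laminar[OF rooted_tree_finite[OF assms(1)]
          rooted_tree_finite[OF assms(2)] rooted_tree_laminar[OF assms(1)]
          rooted_tree_laminar[OF assms(2)] clades combination])
  show ?thesis
  proof
    fix C assume "C \<in> ?U"
    then show "a C = 0" using b0 T12 unfolding b_def by (metis insertCI)
  qed
qed

theorem corollary3p9:
  fixes n :: nat and T1 T2 :: "nat set set"
  assumes "rooted_tree n T1" and "rooted_tree n T2"
  shows "minkowski_sum (K n T1) (K n T2) =
           minkowski_sum {(\<lambda>e. t * ones n e) | t. True}
             (cone_gen (proper_clades n T1 \<union> proper_clades n T2) (\<lambda>C. - charvec n C))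
       \<and> (\<forall>(a :: nat set \<Rightarrow> real) (t :: real).
            (\<forall>e. (\<Sum>C\<in>proper_clades n T1 \<union> proper_clades n T2. a C * (- charvec n C e)) = t * ones n e)
            \<longrightarrow> (\<forall>C\<in>proper_clades n T1 \<union> proper_clades n T2. a C = 0))"
proof (intro conjI allI impI)
  let ?L = "{(\<lambda>e. t * ones n e) | t. True}"
  let ?cone = "\<lambda>T. cone_gen (proper_clades n T) (\<lambda>C. - charvec n C)"
  have fin: "finite (proper_clades n T1)" "finite (proper_clades n T2)"
    using finite_proper_clades assms by blast+
  have "K n T1 + K n T2 = (?L + ?L) + (?cone T1 + ?cone T2)"
    unfolding K_eq_line_plus_cone[OF assms(1)] K_eq_line_plus_cone[OF assms(2)] by (simp only: ac_simps)
  then show "minkowski_sum (K n T1) (K n T2) =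
      minkowski_sum ?L (cone_gen (proper_clades n T1 \<union> proper_clades n T2) (\<lambda>C. - charvec n C))"
    unfolding minkowski_sum_eq_set_plus line_plus_line cone_gen_Un[OF fin] .
next
  fix a :: "nat set \<Rightarrow> real" and t :: real
  assume eq: "\<forall>e. (\<Sum>C\<in>proper_clades n T1 \<union> proper_clades n T2. a C * (- charvec n C e)) = t * ones n e"
  have "(\<Sum>C\<in>proper_clades n T1 \<union> proper_clades n T2. a C * charvec n C e) = - t * ones n e" for e
    using eq[rule_format, of e] by (simp add: sum_negf)
  then show "\<forall>C\<in>proper_clades n T1 \<union> proper_clades n T2. a C = 0"
    using proper_clades_independent_mod_ones[OF assms] by blast
qed

end
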